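(* Let $(E,\mathcal{B})$ be a measurable space and $m$ a $\sigma$-additive measure on $\mathcal{B}$. Consider the assertions: (1) $m$ is finite; (2) $m$ is $\sigma$-finite; (3) $m$ is $\sigma$-principal; (4) $m$ is CCC; (5) $m$ is localizable. Then (1) $\Rightarrow$ (2) $\Rightarrow$ (3) $\Rightarrow$ (4) $\Rightarrow$ (5). Moreover, assuming Zorn's lemma, (4) $\Rightarrow$ (3).
   Context: A $\sigma$-ideal of $\mathcal{B}$ is a nonempty $\mathcal{I}\subset\mathcal{B}$ closed under countable unions and such that $B\subset I\in\mathcal{I}$, $B\in\mathcal{B}$ imply $B\in\mathcal{I}$. $m$ is $\sigma$-principal if for every $\sigma$-ideal $\mathcal{I}$ there is $L\in\mathcal{I}$ with $m(S\setminus L)=0$ for all $S\in\mathcal{I}$. $m$ is CCC if every family of pairwise disjoint elements of $\mathcal{B}$ of positive measure is countable. $m$ is localizable if for every $\sigma$-ideal $\mathcal{I}$ of $\mathcal{B}$ there is $L\in\mathcal{B}$ such that (i) $m(S\setminus L)=0$ for all $S\in\mathcal{I}$, and (ii) whenever $B\in\mathcal{B}$ satisfies $m(S\setminus B)=0$ for all $S\in\mathcal{I}$, then $m(L\setminus B)=0$. *)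

theory Defs
  imports "HOL-Analysis.Analysis"
begin

definition sigma_ideal :: "'a measure \<Rightarrow> 'a set set \<Rightarrow> bool" where
  "sigma_ideal M I \<longleftrightarrow> I \<subseteq> sets M \<and> I \<noteq> {} \<and>
     (\<forall>f :: nat \<Rightarrow> 'a set. range f \<subseteq> I \<longrightarrow> (\<Union>i. f i) \<in> I) \<and>
     (\<forall>B S. S \<in> I \<longrightarrow> B \<in> sets M \<longrightarrow> B \<subseteq> S \<longrightarrow> B \<in> I)"

definition sigma_principal :: "'a measure \<Rightarrow> bool" where
  "sigma_principal M \<longleftrightarrow> (\<forall>I. sigma_ideal M I \<longrightarrow>
     (\<exists>L\<in>I. \<forall>S\<in>I. emeasure M (S - L) = 0))"

definition CCC :: "'a measure \<Rightarrow> bool" where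
  "CCC M \<longleftrightarrow> (\<forall>F. F \<subseteq> sets M \<longrightarrow> disjoint F \<longrightarrow>
     (\<forall>A\<in>F. emeasure M A > 0) \<longrightarrow> countable F)"

definition localizable :: "'a measure \<Rightarrow> bool" where
  "localizable M \<longleftrightarrow> (\<forall>I. sigma_ideal M I \<longrightarrow>
     (\<exists>L\<in>sets M. (\<forall>S\<in>I. emeasure M (S - L) = 0) \<and>
        (\<forall>B\<in>sets M. (\<forall>S\<in>I. emeasure M (S - B) = 0) \<longrightarrow> emeasure M (L - B) = 0)))"

end

theory Submission
  imports Defs
begin

text \<open>
  In a disjoint family only countably many members meet a fixed set of finite measure in
  positive measure, since these measures are summable; covering the space by countably many
  such sets shows that \<sigma>-finite measures are CCC. Given a \<sigma>-ideal, Zorn's lemma yields a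
  maximal disjoint family of its non-null members; under CCC it is countable, so its union
  lies in the ideal and, by maximality, almost contains every member of it. A member of the
  ideal with this property is automatically a localizing set. Conversely, for a disjoint
  family of non-null sets, an essential supremum of the \<sigma>-ideal of sets covered by countable
  subfamilies is itself covered by a countable subfamily, which must then be the whole family.
\<close>

lemma sigma_ideal_empty: "sigma_ideal M I \<Longrightarrow> {} \<in> I"
  unfolding sigma_ideal_def by blast

lemma sigma_ideal_Diff:
  "sigma_ideal M I \<Longrightarrow> S \<in> I \<Longrightarrow> X \<in> sets M \<Longrightarrow> S - X \<in> I"
  unfolding sigma_ideal_def by (meson Diff_subset sets.Diff subsetD)

lemma sigma_ideal_countable_Union:
  assumes I: "sigma_ideal M I" and G: "countable G" "G \<subseteq> I"
  shows "\<Union>G \<in> I"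
proof (cases "G = {}")
  case True
  then show ?thesis using sigma_ideal_empty[OF I] by simp
next
  case False
  have "range (from_nat_into G) \<subseteq> I"
    using G False by (auto intro: from_nat_into)
  then have "(\<Union>i. from_nat_into G i) \<in> I"
    using I unfolding sigma_ideal_def by blast
  then show ?thesis
    by (simp only: range_from_nat_into[OF False G(1)])
qed

lemma sigma_principalE:
  assumes "sigma_principal M" "sigma_ideal M I"
  obtains L where "L \<in> I" "\<And>S. S \<in> I \<Longrightarrow> emeasure M (S - L) = 0"
  using assms unfolding sigma_principal_def by blast

lemma countable_nonnull_traces_disjoint:
  assumes C: "C \<in> sets M" "emeasure M C < \<infinity>" and F: "F \<subseteq> sets M" "disjoint F"
  shows "countable {A\<in>F. emeasure M (A \<inter> C) \<noteq> 0}"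
proof -
  let ?m = "\<lambda>A. measure M (A \<inter> C)"
  have fmeas: "A \<inter> C \<in> fmeasurable M" if "A \<in> F" for A
    using that F(1) C by (intro fmeasurableI2[OF fmeasurableI[OF C]]) auto
  have "?m summable_on F"
  proof (rule nonneg_bdd_above_summable_on)
    show "bdd_above (sum ?m ` {X. X \<subseteq> F \<and> finite X})"
    proof (rule bdd_aboveI, safe)
      fix X assume X: "X \<subseteq> F" "finite X"
      have "sum ?m X = measure M (\<Union>A\<in>X. A \<inter> C)"
      proof (rule measure_UNION'[symmetric])
        show "pairwise (\<lambda>A B. disjnt (A \<inter> C) (B \<inter> C)) X"
          using pairwise_subset[OF F(2) X(1)] by (auto simp: pairwise_def disjnt_def)
      qed (use X fmeas in auto)
      also have "\<dots> \<le> measure M C"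
      proof (rule measure_mono_fmeasurable)
        show "(\<Union>A\<in>X. A \<inter> C) \<in> sets M"
          using X fmeas by (intro sets.finite_UN) (auto dest: fmeasurableD)
      qed (use C in \<open>auto intro: fmeasurableI\<close>)
      finally show "sum ?m X \<le> measure M C" .
    qed
  qed simp
  then have "countable {A\<in>F. ?m A \<noteq> 0}"
    by (rule summable_countable_real)
  moreover have "emeasure M (A \<inter> C) = ?m A" if "A \<in> F" for A
    using fmeas[OF that] by (simp add: emeasure_eq_measure2)
  ultimately show ?thesis
    by (elim countable_subset[rotated]) auto
qed

lemma sigma_finite_measure_CCC:
  assumes "sigma_finite_measure M"
  shows "CCC M"
  unfolding CCC_def
proof (intro allI impI)
  interpret sigma_finite_measure M by fact
  obtain C :: "nat \<Rightarrow> 'a set" where C: "range C \<subseteq> sets M" "(\<Union>i. C i) = space M"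
    "\<And>i. emeasure M (C i) \<noteq> \<infinity>"
    using sigma_finite by metis
  fix F assume F: "F \<subseteq> sets M" "disjoint F" "\<forall>A\<in>F. emeasure M A > 0"
  have "F \<subseteq> (\<Union>i. {A\<in>F. emeasure M (A \<inter> C i) \<noteq> 0})"
  proof
    fix A assume A: "A \<in> F"
    then have AM: "A \<in> sets M"
      using F(1) by blast
    have "emeasure M (\<Union>i. A \<inter> C i) \<noteq> 0"
      using A F(3) C(2) sets.sets_into_space[OF AM] by (auto simp: Int_UN_distrib[symmetric] Int_absorb2)
    then have "\<exists>i. emeasure M (A \<inter> C i) \<noteq> 0"
      using AM C(1) emeasure_UN_eq_0[of M "\<lambda>i. A \<inter> C i"] by blast
    then show "A \<in> (\<Union>i. {A\<in>F. emeasure M (A \<inter> C i) \<noteq> 0})"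
      using A by blast
  qed
  moreover have "countable {A\<in>F. emeasure M (A \<inter> C i) \<noteq> 0}" for i
    using C F(1,2) by (intro countable_nonnull_traces_disjoint) (auto simp: less_top)
  ultimately show "countable F"
    by (meson countable_UN countable_subset UNIV_I countableI_type)
qed

lemma sigma_ideal_countably_covered:
  "sigma_ideal M {B\<in>sets M. \<exists>G\<subseteq>F. countable G \<and> B \<subseteq> \<Union>G}"
  unfolding sigma_ideal_def
proof (intro conjI allI impI)
  show "{B\<in>sets M. \<exists>G\<subseteq>F. countable G \<and> B \<subseteq> \<Union>G} \<noteq> {}"
    by blast
next
  fix f :: "nat \<Rightarrow> 'a set"
  assume f: "range f \<subseteq> {B\<in>sets M. \<exists>G\<subseteq>F. countable G \<and> B \<subseteq> \<Union>G}"
  then obtain G where G: "\<And>i. G i \<subseteq> F \<and> countable (G i) \<and> f i \<subseteq> \<Union>(G i)"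
    by (simp add: image_subset_iff) metis
  have "(\<Union>i. f i) \<in> sets M"
    using f by (intro sets.countable_UN) auto
  moreover have "(\<Union>i. G i) \<subseteq> F" "countable (\<Union>i. G i)" "(\<Union>i. f i) \<subseteq> \<Union>(\<Union>i. G i)"
    using G by auto blast
  ultimately show "(\<Union>i. f i) \<in> {B\<in>sets M. \<exists>G\<subseteq>F. countable G \<and> B \<subseteq> \<Union>G}"
    by blast
qed blast+

lemma sigma_principal_CCC:
  assumes "sigma_principal M"
  shows "CCC M"
  unfolding CCC_def
proof (intro allI impI)
  fix F assume F: "F \<subseteq> sets M" "disjoint F" "\<forall>A\<in>F. emeasure M A > 0"
  let ?I = "{B\<in>sets M. \<exists>G\<subseteq>F. countable G \<and> B \<subseteq> \<Union>G}"
  obtain L where "L \<in> ?I" and L: "\<And>S. S \<in> ?I \<Longrightarrow> emeasure M (S - L) = 0"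
    by (rule sigma_principalE[OF assms sigma_ideal_countably_covered]) blast
  then obtain G where G: "G \<subseteq> F" "countable G" "L \<subseteq> \<Union>G"
    by blast
  have "A \<in> G" if A: "A \<in> F" for A
  proof (rule ccontr)
    assume "A \<notin> G"
    then have "A \<inter> \<Union>G = {}"
      using F(2) G(1) A by (auto dest: disjointD)
    then have "A - L = A"
      using G(3) by blast
    moreover have "A \<in> ?I"
    proof -
      have "{A} \<subseteq> F" "countable {A}" "A \<subseteq> \<Union>{A}"
        using A by auto
      then show ?thesis
        using A F(1) by blast
    qed
    ultimately have "emeasure M A = 0"
      using L[of A] by simp
    then show False
      using A F(3) by auto
  qed
  then have "F \<subseteq> G"
    by blast
  then show "countable F"
    using G(2) by (rule countable_subset)
qed

lemma exists_maximal_disjoint_subfamily: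
  "\<exists>F\<subseteq>P. disjoint F \<and> (\<forall>A\<in>P. A \<inter> \<Union>F = {} \<longrightarrow> A \<in> F)"
proof -
  let ?Z = "{F. F \<subseteq> P \<and> disjoint F}"
  have "\<Union>Ch \<in> ?Z" if "Ch \<in> chains ?Z" for Ch
  proof -
    have Ch: "Ch \<subseteq> ?Z" "chain\<^sub>\<subseteq> Ch"
      using that unfolding chains_def by blast+
    then have "disjoint (\<Union>Ch)"
      by (intro pairwise_chain_Union) blast+
    moreover have "\<Union>Ch \<subseteq> P"
      using Ch(1) by blast
    ultimately show ?thesis by blast
  qed
  then have "\<exists>F\<in>?Z. \<forall>X\<in>?Z. F \<subseteq> X \<longrightarrow> X = F"
    by (intro Zorn_Lemma ballI)
  then obtain F where "F \<in> ?Z" and max: "\<forall>X\<in>?Z. F \<subseteq> X \<longrightarrow> X = F" ..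
  then have F: "F \<subseteq> P" "disjoint F"
    by simp_all
  have "A \<in> F" if "A \<in> P" "A \<inter> \<Union>F = {}" for A
  proof -
    have "disjoint (insert A F)"
      using F(2) that(2) by (auto simp: pairwise_insert disjnt_def)
    then have "insert A F = F"
      using F(1) that(1) max by blast
    then show ?thesis by blast
  qed
  then show ?thesis
    using F by blast
qed

lemma CCC_sigma_principal:
  assumes "CCC M"
  shows "sigma_principal M"
  unfolding sigma_principal_def
proof (intro allI impI)
  fix I assume I: "sigma_ideal M I"
  have IM: "I \<subseteq> sets M"
    using I unfolding sigma_ideal_def by blast
  obtain F where F: "F \<subseteq> {A\<in>I. emeasure M A > 0}" "disjoint F"
    and max: "\<And>A. A \<in> I \<Longrightarrow> emeasure M A > 0 \<Longrightarrow> A \<inter> \<Union>F = {} \<Longrightarrow> A \<in> F"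
    using exists_maximal_disjoint_subfamily[of "{A\<in>I. emeasure M A > 0}"] by blast
  have "countable F"
    using assms F IM unfolding CCC_def by blast
  then have UF: "\<Union>F \<in> I"
    using F(1) by (intro sigma_ideal_countable_Union[OF I]) auto
  have "emeasure M (S - \<Union>F) = 0" if S: "S \<in> I" for S
  proof (rule ccontr)
    assume "emeasure M (S - \<Union>F) \<noteq> 0"
    moreover have "S - \<Union>F \<in> I"
      using sigma_ideal_Diff[OF I S] UF IM by blast
    ultimately have "S - \<Union>F \<in> F"
      by (intro max) (auto simp: zero_less_iff_neq_zero)
    then have "S - \<Union>F = {}"
      by blast
    then show False
      using \<open>emeasure M (S - \<Union>F) \<noteq> 0\<close> by (metis emeasure_empty)
  qed
  then show "\<exists>L\<in>I. \<forall>S\<in>I. emeasure M (S - L) = 0"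
    using UF by blast
qed

lemma sigma_principal_localizable:
  assumes "sigma_principal M"
  shows "localizable M"
  unfolding localizable_def
proof (intro allI impI)
  fix I assume I: "sigma_ideal M I"
  obtain L where L: "L \<in> I" "\<And>S. S \<in> I \<Longrightarrow> emeasure M (S - L) = 0"
    by (rule sigma_principalE[OF assms I]) blast
  moreover have "L \<in> sets M"
    using I L(1) unfolding sigma_ideal_def by blast
  ultimately show "\<exists>L\<in>sets M. (\<forall>S\<in>I. emeasure M (S - L) = 0) \<and>
        (\<forall>B\<in>sets M. (\<forall>S\<in>I. emeasure M (S - B) = 0) \<longrightarrow> emeasure M (L - B) = 0)"
    by blast
qed

theorem theoremA1:
  fixes M :: "'a measure"
  shows "(finite_measure M \<longrightarrow> sigma_finite_measure M) \<and>
         (sigma_finite_measure M \<longrightarrow> sigma_principal M) \<and>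
         (sigma_principal M \<longrightarrow> CCC M) \<and>
         (CCC M \<longrightarrow> localizable M) \<and>
         (CCC M \<longrightarrow> sigma_principal M)"
proof (intro conjI impI)
  show "finite_measure M \<Longrightarrow> sigma_finite_measure M"
    by (simp add: finite_measure_def)
  show "sigma_finite_measure M \<Longrightarrow> sigma_principal M"
    by (intro CCC_sigma_principal sigma_finite_measure_CCC)
  show "sigma_principal M \<Longrightarrow> CCC M"
    by (rule sigma_principal_CCC)
  show "CCC M \<Longrightarrow> localizable M"
    by (intro sigma_principal_localizable CCC_sigma_principal)
  show "CCC M \<Longrightarrow> sigma_principal M"
    by (rule CCC_sigma_principal)
qed

end
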